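(* For $\nu\in\mathbb C$ and integers $m\ge0$, $0\le i\le\lfloor m/2\rfloor$, define $$a_i(\nu,m)=q^{-m(m+\nu)}q^{i(3i+\nu-1)}\frac{(-1)^i(q^{2\nu};q^2)_{m-i}(q^2;q^2)_{m-i}}{(q^2;q^2)_i(q^{2\nu};q^2)_i(q^2;q^2)_{m-2i}},$$ and for $m\ge1$, $0\le j\le\lfloor(m-1)/2\rfloor$, define $b_j(\nu,m)=-q^{2j-m-\nu}a_j(\nu+1,m-1)$ (i.e. $b_j(\nu,m+1)=-q^{2j-m-\nu-1}a_j(\nu+1,m)$). Then for every $\nu\in\mathbb C$ with $q^{2\nu+2i}\ne1$ for all integers $i\ge0$, every $m\ge0$ and every $x>0$, $$J_{\nu+m}(xq^m;q^2)=\sum_{i=0}^{\lfloor m/2\rfloor}\frac{a_i(\nu,m)}{x^{m-2i}}J_\nu(xq^i;q^2)+\sum_{j=0}^{\lfloor(m-1)/2\rfloor}\frac{b_j(\nu,m)}{x^{m-1-2j}}J_{\nu-1}(xq^j;q^2).$$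
   Context: Fix $0<q<1$; $(a;q)_0=1$, $(a;q)_k=\prod_{i=0}^{k-1}(1-aq^i)$, $(a;q)_\infty=\prod_{i\ge0}(1-aq^i)$. For $\nu\in\mathbb C$ and $x>0$ the Hahn–Exton $q$-Bessel function is $$J_\nu(x;q^2)=\frac{x^\nu}{(q^2;q^2)_\infty}\sum_{k=0}^\infty\frac{(-1)^kq^{k(k+1)}(q^{2\nu+2k+2};q^2)_\infty}{(q^2;q^2)_k}\,x^{2k}.$$ $\lfloor a\rfloor$ is the largest integer $\le a$; empty sums are zero. *)

theory Defs
  imports "HOL-Analysis.Analysis"
begin

definition qpoch :: "complex \<Rightarrow> complex \<Rightarrow> nat \<Rightarrow> complex" where
  "qpoch a b k = (\<Prod>i<k. (1 - a * b ^ i))"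

definition qpoch_inf :: "complex \<Rightarrow> complex \<Rightarrow> complex" where
  "qpoch_inf a b = lim (\<lambda>n. qpoch a b n)"

definition qpow :: "real \<Rightarrow> complex \<Rightarrow> complex" where
  "qpow q z = complex_of_real q powr z"

definition hahn_exton :: "real \<Rightarrow> complex \<Rightarrow> real \<Rightarrow> complex" where
  "hahn_exton q \<nu> x =
     complex_of_real x powr \<nu> / qpoch_inf (complex_of_real (q^2)) (complex_of_real (q^2)) *
     (\<Sum>k. (-1) ^ k * complex_of_real (q ^ (k * (k + 1))) *
            qpoch_inf (qpow q (2 * \<nu> + 2 * of_nat k + 2)) (complex_of_real (q^2)) /
            qpoch (complex_of_real (q^2)) (complex_of_real (q^2)) k *
            complex_of_real (x ^ (2 * k)))"

definition coef_a :: "real \<Rightarrow> complex \<Rightarrow> nat \<Rightarrow> nat \<Rightarrow> complex" where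
  "coef_a q \<nu> m i =
     qpow q (- (of_nat m * (of_nat m + \<nu>))) *
     qpow q (of_nat i * (3 * of_nat i + \<nu> - 1)) *
     ((-1) ^ i * qpoch (qpow q (2 * \<nu>)) (complex_of_real (q^2)) (m - i) *
        qpoch (complex_of_real (q^2)) (complex_of_real (q^2)) (m - i)) /
     (qpoch (complex_of_real (q^2)) (complex_of_real (q^2)) i *
        qpoch (qpow q (2 * \<nu>)) (complex_of_real (q^2)) i *
        qpoch (complex_of_real (q^2)) (complex_of_real (q^2)) (m - 2 * i))"

definition coef_b :: "real \<Rightarrow> complex \<Rightarrow> nat \<Rightarrow> nat \<Rightarrow> complex" where
  "coef_b q \<nu> m j = - qpow q (2 * of_nat j - of_nat m - \<nu>) * coef_a q (\<nu> + 1) (m - 1) j"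

end

theory Submission
  imports Defs
begin

(* The case m = 1 is the contiguous relation
     J_(nu+1)(x q) = q^(-1-nu) ((1 - q^(2 nu)) J_nu(x) / x - J_(nu-1)(x)),
   which holds termwise in the defining series because (a;q^2)_inf = (1 - a) (a q^2;q^2)_inf.
   For the induction step, apply the expansion for (nu + 1, m) at the point x q and rewrite every
   J_(nu+1)(x q^(i+1)) by the contiguous relation.  Collecting terms, the coefficients of J_nu(x q^i)
   and J_(nu-1)(x q^j) are a_i(nu, m+1) and b_j(nu, m+1): up to signs and powers of q this is a
   q-Pascal rule for the quotients of q-Pochhammer symbols occurring in a_i. *)

lemma mult_power_neq_1:
  fixes b :: "'a::real_normed_div_algebra"
  assumes "norm b < 1"
  shows "b * b ^ j \<noteq> 1"
proof -
  have "norm (b * b ^ j) < 1"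
    using assms by (smt (verit) mult_left_le norm_ge_zero norm_mult norm_power power_le_one)
  then show ?thesis by auto
qed

lemma power_double_Suc: "q ^ (2 * k + 2) = q^2 * (q^2) ^ k" for q :: "'a::monoid_mult"
  unfolding power_add power_mult by (metis power_commutes)

lemma summable_ratio_tendsto_0:
  fixes f :: "nat \<Rightarrow> 'a::banach"
  assumes "\<forall>\<^sub>F n in sequentially. norm (f (Suc n)) \<le> c n * norm (f n)" and "c \<longlonglongrightarrow> 0"
  shows "summable f"
proof -
  have "\<forall>\<^sub>F n in sequentially. c n < 1 / 2"
    using assms(2) by (rule order_tendstoD) simp
  with assms(1) have "\<forall>\<^sub>F n in sequentially. norm (f (Suc n)) \<le> 1 / 2 * norm (f n)"
    by eventually_elim (meson less_imp_le mult_right_mono norm_ge_zero order_trans)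
  then obtain N where "\<And>n. n \<ge> N \<Longrightarrow> norm (f (Suc n)) \<le> 1 / 2 * norm (f n)"
    unfolding eventually_sequentially by blast
  then show ?thesis by (intro summable_ratio_test[of "1 / 2" N]) simp_all
qed

lemma sum_half_shift:
  fixes f g :: "nat \<Rightarrow> 'a::comm_monoid_add"
  shows "(\<Sum>i\<in>{0..m div 2}. f i) + (\<Sum>j<Suc m div 2. g (Suc j)) =
         (\<Sum>i\<in>{0..Suc m div 2}. (if 2 * i \<le> m then f i else 0) + (if 1 \<le> i then g i else 0))"
proof -
  have "{i \<in> {0..Suc m div 2}. 2 * i \<le> m} = {0..m div 2}" by auto
  then have A: "(\<Sum>i\<in>{0..Suc m div 2}. if 2 * i \<le> m then f i else 0) = (\<Sum>i\<in>{0..m div 2}. f i)"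
    by (simp only: sum.inter_filter[OF finite_atLeastAtMost, symmetric])
  have "{i \<in> {0..Suc m div 2}. 1 \<le> i} = {Suc 0..Suc m div 2}" by auto
  then have B: "(\<Sum>i\<in>{0..Suc m div 2}. if 1 \<le> i then g i else 0) = (\<Sum>j<Suc m div 2. g (Suc j))"
    by (simp only: sum.inter_filter[OF finite_atLeastAtMost, symmetric] sum.atLeast1_atMost_eq)
  show ?thesis unfolding sum.distrib A B ..
qed

lemma qpoch_Suc: "qpoch a b (Suc n) = qpoch a b n * (1 - a * b ^ n)"
  by (simp add: qpoch_def)

lemma qpoch_Suc_shift: "qpoch a b (Suc n) = (1 - a) * qpoch (a * b) b n"
  unfolding qpoch_def by (subst prod.lessThan_Suc_shift) (simp add: mult.assoc)

lemma qpoch_mult_eq_divide: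
  assumes "a \<noteq> 1"
  shows "qpoch (a * b) b n = qpoch a b (Suc n) / (1 - a)"
  using assms by (simp add: qpoch_Suc_shift)

lemma qpoch_nonzero:
  assumes "\<And>j. a * b ^ j \<noteq> 1"
  shows "qpoch a b n \<noteq> 0"
  using assms unfolding qpoch_def by (auto simp: prod_zero_iff)

lemma qpoch_self_nonzero:
  assumes "norm b < 1"
  shows "qpoch b b n \<noteq> 0"
  using qpoch_nonzero mult_power_neq_1[OF assms] by blast

lemma qpoch_LIMSEQ:
  assumes "norm b < 1"
  shows "(\<lambda>n. qpoch a b n) \<longlonglongrightarrow> qpoch_inf a b"
proof -
  have "summable (\<lambda>i. norm ((1 - a * b ^ i) - 1))"
    using assms by (simp add: norm_mult norm_power summable_geometric)
  then have "convergent_prod (\<lambda>i. 1 - a * b ^ i)"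
    by (intro abs_convergent_prod_imp_convergent_prod summable_imp_abs_convergent_prod)
  then have "(\<lambda>n. qpoch a b (Suc n)) \<longlonglongrightarrow> prodinf (\<lambda>i. 1 - a * b ^ i)"
    unfolding qpoch_def lessThan_Suc_atMost by (rule convergent_prod_LIMSEQ)
  then have "(\<lambda>n. qpoch a b n) \<longlonglongrightarrow> prodinf (\<lambda>i. 1 - a * b ^ i)"
    by (rule LIMSEQ_imp_Suc)
  then show ?thesis unfolding qpoch_inf_def by (simp add: limI)
qed

lemma qpoch_inf_Suc_shift:
  assumes "norm b < 1"
  shows "qpoch_inf a b = (1 - a) * qpoch_inf (a * b) b"
proof -
  have "(\<lambda>n. qpoch a b (Suc n)) \<longlonglongrightarrow> (1 - a) * qpoch_inf (a * b) b"
    unfolding qpoch_Suc_shift by (intro tendsto_mult tendsto_const qpoch_LIMSEQ assms)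
  then have "(\<lambda>n. qpoch a b n) \<longlonglongrightarrow> (1 - a) * qpoch_inf (a * b) b"
    by (rule LIMSEQ_imp_Suc)
  with qpoch_LIMSEQ[OF assms] show ?thesis using LIMSEQ_unique by blast
qed

lemma qpow_add: "qpow q (a + b) = qpow q a * qpow q b"
  by (simp add: qpow_def powr_add)

lemma qpow_0: "0 < q \<Longrightarrow> qpow q 0 = 1"
  by (simp add: qpow_def)

lemma qpow_of_nat: "0 < q \<Longrightarrow> qpow q (of_nat n) = complex_of_real (q ^ n)"
  by (simp add: qpow_def)

lemma qpow_eq_mult_power:
  assumes "0 < q" "a = b + of_nat n"
  shows "qpow q a = qpow q b * complex_of_real (q ^ n)"
  using assms by (simp add: qpow_add qpow_of_nat)

lemma qpow_minus_of_nat: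
  assumes "0 < q"
  shows "qpow q (- of_nat n) = inverse (complex_of_real (q ^ n))"
proof -
  have "complex_of_real (q ^ n) * qpow q (- of_nat n) = 1"
    using qpow_add[of q "of_nat n" "- of_nat n"] qpow_of_nat[OF assms] qpow_0[OF assms] by simp
  then show ?thesis by (rule inverse_unique[symmetric])
qed

lemma divide_of_real_power_mult:
  assumes "0 < q"
  shows "c / complex_of_real ((x * q) ^ n) = qpow q (- of_nat n) * c / complex_of_real (x ^ n)"
  by (simp add: qpow_minus_of_nat[OF assms] power_mult_distrib divide_inverse)

lemma qpow_double_Suc:
  assumes "0 < q"
  shows "qpow q (2 * (\<nu> + 1)) = qpow q (2 * \<nu>) * complex_of_real (q^2)"
  by (rule qpow_eq_mult_power[OF assms]) (simp add: algebra_simps)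

lemma qpow_double_mult_power_neq_1:
  assumes "0 < q" and "\<forall>i::nat. qpow q (2 * \<nu> + 2 * of_nat i) \<noteq> 1"
  shows "qpow q (2 * \<nu>) * complex_of_real (q^2) ^ j \<noteq> 1"
proof -
  have "qpow q (2 * \<nu> + 2 * of_nat j) = qpow q (2 * \<nu>) * complex_of_real (q ^ (2 * j))"
    by (rule qpow_eq_mult_power[OF assms(1)]) simp
  then show ?thesis using assms(2) by (metis of_real_power power_mult)
qed

lemma norm_of_real_square_less_1:
  assumes "0 < q" "q < 1"
  shows "norm (complex_of_real (q ^ 2)) < 1"
  using assms by (simp only: norm_of_real) (simp add: abs_square_less_1)

section \<open>The contiguous relation\<close>

definition hahn_exton_term :: "real \<Rightarrow> complex \<Rightarrow> real \<Rightarrow> nat \<Rightarrow> complex" where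
  "hahn_exton_term q \<nu> x k = (-1) ^ k * complex_of_real (q ^ (k * (k + 1))) *
     qpoch_inf (qpow q (2 * \<nu> + 2 * of_nat k + 2)) (complex_of_real (q^2)) /
     qpoch (complex_of_real (q^2)) (complex_of_real (q^2)) k * complex_of_real (x ^ (2 * k))"

lemma hahn_exton_eq_suminf:
  "hahn_exton q \<nu> x = complex_of_real x powr \<nu> /
     qpoch_inf (complex_of_real (q^2)) (complex_of_real (q^2)) * (\<Sum>k. hahn_exton_term q \<nu> x k)"
  unfolding hahn_exton_def hahn_exton_term_def ..

lemma hahn_exton_term_pred:
  assumes "0 < q" "q < 1"
  shows "hahn_exton_term q (\<nu> - 1) x k = (1 - qpow q (2 * \<nu> + 2 * of_nat k)) * hahn_exton_term q \<nu> x k"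
proof -
  have "qpow q (2 * \<nu> + 2 * of_nat k) * complex_of_real (q^2) = qpow q (2 * \<nu> + 2 * of_nat k + 2)"
    by (rule qpow_eq_mult_power[symmetric]) (use assms in auto)
  then have shift: "qpoch_inf (qpow q (2 * \<nu> + 2 * of_nat k)) (complex_of_real (q^2)) =
      (1 - qpow q (2 * \<nu> + 2 * of_nat k)) * qpoch_inf (qpow q (2 * \<nu> + 2 * of_nat k + 2)) (complex_of_real (q^2))"
    using qpoch_inf_Suc_shift[OF norm_of_real_square_less_1[OF assms]] by metis
  have exponent: "2 * (\<nu> - 1) + 2 * of_nat k + 2 = 2 * \<nu> + 2 * of_nat k" by simp
  show ?thesis unfolding hahn_exton_term_def exponent shift by (simp add: mult_ac)
qed

lemma hahn_exton_term_Suc: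
  assumes "0 < q" "q < 1"
  shows "(1 - complex_of_real (q ^ (2 * k + 2))) * hahn_exton_term q \<nu> x (Suc k) =
         - complex_of_real (q^2 * x^2) * hahn_exton_term q (\<nu> + 1) (q * x) k"
proof -
  define Q where "Q = complex_of_real (q^2)"
  have "Q * Q ^ k = complex_of_real (q ^ (2 * k + 2))"
    unfolding Q_def power_double_Suc by simp
  then have poch: "qpoch Q Q (Suc k) = qpoch Q Q k * (1 - complex_of_real (q ^ (2 * k + 2)))"
    by (simp add: qpoch_Suc)
  have "qpoch Q Q (Suc k) \<noteq> 0" "qpoch Q Q k \<noteq> 0"
    unfolding Q_def using qpoch_self_nonzero norm_of_real_square_less_1[OF assms] by blast+
  with poch have nz: "1 - complex_of_real (q ^ (2 * k + 2)) \<noteq> 0" by auto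
  have "Suc k * (Suc k + 1) = k * (k + 1) + 2 * k + 2" by simp
  then have q_exp: "q ^ (Suc k * (Suc k + 1)) = q ^ (k * (k + 1)) * q ^ (2 * k) * q^2"
    by (simp only: power_add)
  have x_exp: "x ^ (2 * Suc k) = x ^ (2 * k) * x^2"
    by (metis mult_Suc_right power_add mult.commute)
  have qx_exp: "(q * x) ^ (2 * k) = q ^ (2 * k) * x ^ (2 * k)"
    by (rule power_mult_distrib)
  have nu_exp: "2 * (\<nu> + 1) + 2 * of_nat k + 2 = 2 * \<nu> + 2 * of_nat (Suc k) + 2" by simp
  show ?thesis
    unfolding hahn_exton_term_def Q_def[symmetric] poch q_exp x_exp qx_exp nu_exp
    using nz \<open>qpoch Q Q k \<noteq> 0\<close> by (simp add: field_simps)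
qed

lemma hahn_exton_term_Suc_ratio:
  assumes "0 < q" "q < 1"
  shows "(1 - complex_of_real (q ^ (2 * k + 2))) * (1 - qpow q (2 * \<nu> + 2 * of_nat k + 2)) *
           hahn_exton_term q \<nu> x (Suc k) = - complex_of_real (q ^ (2 * k + 2) * x^2) * hahn_exton_term q \<nu> x k"
proof -
  define w where "w = qpow q (2 * \<nu> + 2 * of_nat k + 2)"
  have pred: "hahn_exton_term q \<nu> x k = (1 - w) * hahn_exton_term q (\<nu> + 1) x k"
    using hahn_exton_term_pred[OF assms, of "\<nu> + 1"] unfolding w_def by (simp add: algebra_simps)
  have scale: "hahn_exton_term q (\<nu> + 1) (q * x) k = complex_of_real (q ^ (2 * k)) * hahn_exton_term q (\<nu> + 1) x k"
    by (simp add: hahn_exton_term_def power_mult_distrib)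
  have "(1 - complex_of_real (q ^ (2 * k + 2))) * (1 - w) * hahn_exton_term q \<nu> x (Suc k) =
      (1 - w) * ((1 - complex_of_real (q ^ (2 * k + 2))) * hahn_exton_term q \<nu> x (Suc k))"
    by (simp only: mult_ac)
  also have "\<dots> = - complex_of_real (q^2 * x^2 * q ^ (2 * k)) * ((1 - w) * hahn_exton_term q (\<nu> + 1) x k)"
    unfolding hahn_exton_term_Suc[OF assms] scale by (simp only: of_real_mult mult_ac mult_minus_left mult_minus_right)
  also have "\<dots> = - complex_of_real (q ^ (2 * k + 2) * x^2) * hahn_exton_term q \<nu> x k"
    unfolding pred[symmetric] power_add by (simp only: mult_ac)
  finally show ?thesis unfolding w_def .
qed

lemma summable_hahn_exton_term:
  assumes "0 < q" "q < 1"
  shows "summable (hahn_exton_term q \<nu> x)"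
proof (rule summable_ratio_tendsto_0)
  define d where "d k = norm (1 - complex_of_real (q ^ (2 * k + 2))) * norm (1 - qpow q (2 * \<nu> + 2 * of_nat k + 2))" for k
  have q2: "(\<lambda>k. (q^2) ^ k) \<longlonglongrightarrow> 0"
    using assms by (intro LIMSEQ_power_zero) (simp add: abs_square_less_1)
  note pow = power_double_Suc[of q]
  have w: "qpow q (2 * \<nu> + 2 * of_nat k + 2) = qpow q (2 * \<nu> + 2) * complex_of_real (q ^ (2 * k))" for k
    by (rule qpow_eq_mult_power[OF assms(1)]) simp
  have "d \<longlonglongrightarrow> norm (1 - complex_of_real (q^2 * 0)) * norm (1 - qpow q (2 * \<nu> + 2) * complex_of_real 0)"
    unfolding d_def pow w power_mult by (intro tendsto_intros q2)
  then have d: "d \<longlonglongrightarrow> 1" by simp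
  have "(\<lambda>k. q ^ (2 * k + 2) * x^2 / d k) \<longlonglongrightarrow> q^2 * 0 * x^2 / 1"
    unfolding pow by (intro tendsto_intros q2 d) simp
  then show "(\<lambda>k. q ^ (2 * k + 2) * x^2 / d k) \<longlonglongrightarrow> 0" by simp
  have "\<forall>\<^sub>F k in sequentially. d k > 0"
    using d by (rule order_tendstoD) simp
  then show "\<forall>\<^sub>F k in sequentially.
      norm (hahn_exton_term q \<nu> x (Suc k)) \<le> q ^ (2 * k + 2) * x^2 / d k * norm (hahn_exton_term q \<nu> x k)"
  proof eventually_elim
    case (elim k)
    have "d k * norm (hahn_exton_term q \<nu> x (Suc k)) =
        norm ((1 - complex_of_real (q ^ (2 * k + 2))) * (1 - qpow q (2 * \<nu> + 2 * of_nat k + 2)) *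
          hahn_exton_term q \<nu> x (Suc k))"
      unfolding d_def norm_mult ..
    also have "\<dots> = q ^ (2 * k + 2) * x^2 * norm (hahn_exton_term q \<nu> x k)"
      unfolding hahn_exton_term_Suc_ratio[OF assms] norm_mult norm_minus_cancel norm_of_real
      using assms by simp
    finally have "d k * norm (hahn_exton_term q \<nu> x (Suc k)) = q ^ (2 * k + 2) * x^2 * norm (hahn_exton_term q \<nu> x k)" .
    with elim show ?case by (simp add: field_simps)
  qed
qed

lemma suminf_hahn_exton_term_contiguous:
  assumes "0 < q" "q < 1"
  shows "(1 - qpow q (2 * \<nu>)) * (\<Sum>k. hahn_exton_term q \<nu> x k) - (\<Sum>k. hahn_exton_term q (\<nu> - 1) x k) =
         qpow q (2 * \<nu> + 2) * complex_of_real (x^2) * (\<Sum>k. hahn_exton_term q (\<nu> + 1) (q * x) k)"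
proof -
  define f where "f k = (1 - qpow q (2 * \<nu>)) * hahn_exton_term q \<nu> x k - hahn_exton_term q (\<nu> - 1) x k" for k
  have summable: "summable (hahn_exton_term q \<mu> y)" for \<mu> y
    by (rule summable_hahn_exton_term[OF assms])
  have summable_f: "summable f"
    unfolding f_def by (intro summable_diff summable_mult summable)
  have f: "f k = - qpow q (2 * \<nu>) * (1 - complex_of_real (q ^ (2 * k))) * hahn_exton_term q \<nu> x k" for k
  proof -
    have w: "qpow q (2 * \<nu> + 2 * of_nat k) = qpow q (2 * \<nu>) * complex_of_real (q ^ (2 * k))"
      by (rule qpow_eq_mult_power[OF assms(1)]) simp
    have "(1 - w) * t - (1 - w * c) * t = - w * (1 - c) * t" for w c t :: complex
      by (simp add: algebra_simps)
    then show ?thesis unfolding f_def hahn_exton_term_pred[OF assms] w .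
  qed
  have qpow2: "qpow q (2 * \<nu> + 2) = qpow q (2 * \<nu>) * complex_of_real (q^2)"
    by (rule qpow_eq_mult_power[OF assms(1)]) simp
  have f_Suc: "f (Suc k) = qpow q (2 * \<nu> + 2) * complex_of_real (x^2) * hahn_exton_term q (\<nu> + 1) (q * x) k" for k
  proof -
    have "2 * Suc k = 2 * k + 2" by simp
    then have "f (Suc k) = - qpow q (2 * \<nu>) * ((1 - complex_of_real (q ^ (2 * k + 2))) * hahn_exton_term q \<nu> x (Suc k))"
      unfolding f by (simp only: mult.assoc)
    then show ?thesis unfolding hahn_exton_term_Suc[OF assms] qpow2 by simp
  qed
  have "(1 - qpow q (2 * \<nu>)) * (\<Sum>k. hahn_exton_term q \<nu> x k) - (\<Sum>k. hahn_exton_term q (\<nu> - 1) x k) = (\<Sum>k. f k)"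
    unfolding f_def suminf_mult[OF summable, symmetric]
    using suminf_diff[OF summable_mult[OF summable] summable] by simp
  also have "\<dots> = (\<Sum>k. f (Suc k))"
    using suminf_split_head[OF summable_f] f[of 0] by simp
  also have "\<dots> = qpow q (2 * \<nu> + 2) * complex_of_real (x^2) * (\<Sum>k. hahn_exton_term q (\<nu> + 1) (q * x) k)"
    unfolding f_Suc by (rule suminf_mult[OF summable])
  finally show ?thesis .
qed

lemma coef_a_1_0:
  assumes "0 < q" "q < 1"
  shows "coef_a q \<nu> 1 0 = qpow q (- (1 + \<nu>)) * (1 - qpow q (2 * \<nu>))"
proof -
  have "qpoch (complex_of_real (q^2)) (complex_of_real (q^2)) 1 \<noteq> 0"
    by (rule qpoch_self_nonzero[OF norm_of_real_square_less_1[OF assms]])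
  then show ?thesis unfolding coef_a_def using assms by (simp add: qpoch_def qpow_def)
qed

lemma coef_b_1_0:
  assumes "0 < q"
  shows "coef_b q \<nu> 1 0 = - qpow q (- 1 - \<nu>)"
  unfolding coef_b_def coef_a_def using assms by (simp add: qpoch_def qpow_def)

lemma hahn_exton_contiguous:
  assumes "0 < q" "q < 1" "0 < y"
  shows "hahn_exton q (\<nu> + 1) (y * q) =
         coef_a q \<nu> 1 0 / complex_of_real y * hahn_exton q \<nu> y + coef_b q \<nu> 1 0 * hahn_exton q (\<nu> - 1) y"
proof -
  define C where "C = qpoch_inf (complex_of_real (q^2)) (complex_of_real (q^2))"
  define Y where "Y = complex_of_real y"
  define S where "S \<mu> z = (\<Sum>k. hahn_exton_term q \<mu> z k)" for \<mu> z
  have "Y \<noteq> 0" unfolding Y_def using assms by simp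
  have J: "hahn_exton q \<nu> y = Y powr \<nu> / C * S \<nu> y"
    unfolding hahn_exton_eq_suminf Y_def C_def S_def ..
  have J_pred: "hahn_exton q (\<nu> - 1) y = Y powr \<nu> / Y / C * S (\<nu> - 1) y"
    unfolding hahn_exton_eq_suminf Y_def C_def S_def by (simp add: powr_diff)
  have "complex_of_real (y * q) powr (\<nu> + 1) = Y powr (\<nu> + 1) * qpow q (\<nu> + 1)"
    unfolding Y_def qpow_def of_real_mult using assms by (intro powr_times_real) auto
  then have J_succ: "hahn_exton q (\<nu> + 1) (y * q) = Y powr \<nu> * Y * qpow q (\<nu> + 1) / C * S (\<nu> + 1) (q * y)"
    unfolding hahn_exton_eq_suminf C_def[symmetric] S_def[symmetric] by (simp add: powr_add mult.commute)
  have rel: "(1 - qpow q (2 * \<nu>)) * S \<nu> y - S (\<nu> - 1) y = qpow q (2 * \<nu> + 2) * Y^2 * S (\<nu> + 1) (q * y)"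
    unfolding S_def Y_def using suminf_hahn_exton_term_contiguous[OF assms(1,2)] by simp
  have exponent: "qpow q (- (1 + \<nu>)) * qpow q (2 * \<nu> + 2) = qpow q (\<nu> + 1)"
    unfolding qpow_add[symmetric] by (simp add: algebra_simps)
  have "coef_a q \<nu> 1 0 / Y * hahn_exton q \<nu> y + coef_b q \<nu> 1 0 * hahn_exton q (\<nu> - 1) y =
      qpow q (- (1 + \<nu>)) * (Y powr \<nu> / (Y * C)) * ((1 - qpow q (2 * \<nu>)) * S \<nu> y - S (\<nu> - 1) y)"
    unfolding J J_pred coef_a_1_0[OF assms(1,2)] coef_b_1_0[OF assms(1)]
    using \<open>Y \<noteq> 0\<close> by (cases "C = 0") (simp_all add: field_simps)
  also have "\<dots> = Y powr \<nu> * Y * (qpow q (- (1 + \<nu>)) * qpow q (2 * \<nu> + 2)) / C * S (\<nu> + 1) (q * y)"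
    unfolding rel using \<open>Y \<noteq> 0\<close> by (cases "C = 0") (simp_all add: field_simps power2_eq_square)
  finally show ?thesis unfolding J_succ exponent Y_def by (rule sym)
qed

section \<open>Recurrences for the coefficients\<close>

definition coef_ratio :: "complex \<Rightarrow> complex \<Rightarrow> nat \<Rightarrow> nat \<Rightarrow> complex" where
  "coef_ratio w Q m i = qpoch w Q (m - i) * qpoch Q Q (m - i) / (qpoch Q Q i * qpoch w Q i * qpoch Q Q (m - 2 * i))"

lemma coef_a_eq_coef_ratio:
  "coef_a q \<nu> m i = (-1) ^ i * qpow q (- (of_nat m * (of_nat m + \<nu>)) + of_nat i * (3 * of_nat i + \<nu> - 1)) *
     coef_ratio (qpow q (2 * \<nu>)) (complex_of_real (q^2)) m i"
  unfolding coef_a_def coef_ratio_def qpow_add by (simp add: times_divide_eq_right mult_ac)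

lemma coef_ratio_Suc_0:
  assumes "norm Q < 1"
  shows "coef_ratio w Q (Suc m) 0 = (1 - w) * coef_ratio (w * Q) Q m 0"
  unfolding coef_ratio_def using qpoch_self_nonzero[OF assms, of m] qpoch_self_nonzero[OF assms, of "Suc m"]
  by (simp add: qpoch_Suc_shift qpoch_def[of _ _ 0])

lemma coef_ratio_middle:
  assumes "norm Q < 1" "\<And>j. w * Q ^ j \<noteq> 1"
  shows "coef_ratio w Q (2 * i) i = 1"
  unfolding coef_ratio_def using qpoch_self_nonzero[OF assms(1), of i] qpoch_nonzero[OF assms(2), of i]
  by (simp add: qpoch_def[of _ _ 0])

lemma coef_ratio_Suc:
  assumes Q: "norm Q < 1" and w: "\<And>j. w * Q ^ j \<noteq> 1" and m: "m = 2 * Suc s + r"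
  shows "coef_ratio w Q (Suc m) (Suc s) =
           Q ^ Suc s * (1 - w) * coef_ratio (w * Q) Q m (Suc s) + coef_ratio (w * Q * Q) Q (m - 1) s"
proof -
  define a where "a = Q ^ Suc s"
  define b where "b = Q ^ Suc r"
  define base where "base = qpoch w Q (Suc (Suc (s + r))) * qpoch Q Q (Suc (s + r)) /
                            (qpoch Q Q s * qpoch w Q (Suc s) * qpoch Q Q r)"
  have Q_nz: "qpoch Q Q n \<noteq> 0" for n by (rule qpoch_self_nonzero[OF Q])
  have w_nz: "qpoch w Q n \<noteq> 0" for n by (rule qpoch_nonzero[OF w])
  have "w \<noteq> 1" "w * Q \<noteq> 1" using w[of 0] w[of 1] by auto
  have "1 - a \<noteq> 0" "1 - b \<noteq> 0"
    unfolding a_def b_def using mult_power_neq_1[OF Q] by (simp_all del: power_Suc add: power_Suc[symmetric])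
  have "1 - w * a \<noteq> 0" unfolding a_def using w[of "Suc s"] by simp
  have ab: "Q ^ Suc (Suc (s + r)) = a * b" unfolding a_def b_def by (simp add: power_add[symmetric])
  have shift1: "qpoch (w * Q) Q n = qpoch w Q (Suc n) / (1 - w)" for n
    by (rule qpoch_mult_eq_divide[OF \<open>w \<noteq> 1\<close>])
  have shift2: "qpoch (w * Q * Q) Q n = qpoch w Q (Suc (Suc n)) / ((1 - w) * (1 - w * Q))" for n
    using qpoch_mult_eq_divide[OF \<open>w * Q \<noteq> 1\<close>, of Q n] by (simp add: shift1)
  have idx: "Suc m - Suc s = Suc (Suc (s + r))" "Suc m - 2 * Suc s = Suc r" "m - Suc s = Suc (s + r)"
    "m - 2 * Suc s = r" "m - 1 - s = Suc (s + r)" "m - 1 - 2 * s = Suc r" using m by auto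
  have u: "qpoch w Q (Suc (Suc s)) = qpoch w Q (Suc s) * (1 - w * a)"
    "qpoch w Q (Suc (Suc (Suc (s + r)))) = qpoch w Q (Suc (Suc (s + r))) * (1 - w * (a * b))"
    unfolding qpoch_Suc[of w Q "Suc s"] qpoch_Suc[of w Q "Suc (Suc (s + r))"] ab a_def by simp_all
  have g: "qpoch Q Q (Suc s) = qpoch Q Q s * (1 - a)" "qpoch Q Q (Suc r) = qpoch Q Q r * (1 - b)"
    "qpoch Q Q (Suc (Suc (s + r))) = qpoch Q Q (Suc (s + r)) * (1 - a * b)"
    unfolding qpoch_Suc[of Q Q s] qpoch_Suc[of Q Q r] qpoch_Suc[of Q Q "Suc (s + r)"] ab a_def b_def
    by (simp_all add: power_add)
  note nz = Q_nz w_nz \<open>w \<noteq> 1\<close> \<open>w * Q \<noteq> 1\<close> \<open>1 - a \<noteq> 0\<close> \<open>1 - b \<noteq> 0\<close> \<open>1 - w * a \<noteq> 0\<close>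
  have R0: "coef_ratio w Q (Suc m) (Suc s) = base * (1 - a * b) / ((1 - a) * (1 - b))"
    unfolding coef_ratio_def idx g base_def using nz by (simp add: divide_simps)
  have R1: "coef_ratio (w * Q) Q m (Suc s) = base / ((1 - a) * (1 - w * a))"
    unfolding coef_ratio_def idx shift1 u g base_def using nz by (simp add: divide_simps)
  have R2: "coef_ratio (w * Q * Q) Q (m - 1) s = base * (1 - w * (a * b)) / ((1 - w * a) * (1 - b))"
    unfolding coef_ratio_def idx shift2 u g base_def using nz by (simp add: divide_simps)
  have pascal: "(1 - a * b) * (1 - w * a) = a * (1 - w) * (1 - b) + (1 - w * (a * b)) * (1 - a)"
    by (simp add: algebra_simps)
  have "coef_ratio w Q (Suc m) (Suc s) = base * ((1 - a * b) * (1 - w * a)) / ((1 - a) * (1 - b) * (1 - w * a))"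
    unfolding R0 using nz by (simp add: divide_simps)
  also have "\<dots> = base * (a * (1 - w) * (1 - b) + (1 - w * (a * b)) * (1 - a)) / ((1 - a) * (1 - b) * (1 - w * a))"
    unfolding pascal ..
  also have "\<dots> = a * (1 - w) * coef_ratio (w * Q) Q m (Suc s) + coef_ratio (w * Q * Q) Q (m - 1) s"
    unfolding R1 R2 using nz by (simp add: divide_simps) (simp add: algebra_simps)
  finally show ?thesis unfolding a_def .
qed

lemma coef_a_Suc_0:
  assumes "0 < q" "q < 1"
  shows "coef_a q \<nu> (Suc m) 0 = qpow q (- of_nat m) * coef_a q (\<nu> + 1) m 0 * coef_a q \<nu> 1 0"
proof -
  define w where "w = qpow q (2 * \<nu>)"
  define Q where "Q = complex_of_real (q^2)"
  have "coef_a q \<nu> (Suc m) 0 = qpow q (- (of_nat (Suc m) * (of_nat (Suc m) + \<nu>))) * (1 - w) * coef_ratio (w * Q) Q m 0"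
    unfolding coef_a_eq_coef_ratio coef_ratio_Suc_0[OF norm_of_real_square_less_1[OF assms]] w_def Q_def
    by simp
  moreover have "coef_a q (\<nu> + 1) m 0 = qpow q (- (of_nat m * (of_nat m + (\<nu> + 1)))) * coef_ratio (w * Q) Q m 0"
    unfolding coef_a_eq_coef_ratio qpow_double_Suc[OF assms(1)] w_def Q_def by simp
  moreover have "qpow q (- (of_nat (Suc m) * (of_nat (Suc m) + \<nu>))) =
      qpow q (- of_nat m) * qpow q (- (of_nat m * (of_nat m + (\<nu> + 1)))) * qpow q (- (1 + \<nu>))"
    unfolding qpow_add[symmetric] by (rule arg_cong[where f = "qpow q"]) (simp add: algebra_simps)
  ultimately show ?thesis
    unfolding coef_a_1_0[OF assms] w_def[symmetric] by (simp add: mult_ac)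
qed

lemma coef_a_Suc:
  assumes "0 < q" "q < 1" and hyp: "\<forall>i::nat. qpow q (2 * \<nu> + 2 * of_nat i) \<noteq> 1"
    and m: "m = 2 * Suc s + r"
  shows "coef_a q \<nu> (Suc m) (Suc s) =
           qpow q (- of_nat (m - Suc s)) * coef_a q (\<nu> + 1) m (Suc s) * coef_a q \<nu> 1 0
         + qpow q (- of_nat (Suc m - 2 * Suc s)) * coef_b q (\<nu> + 1) m s"
proof -
  define w where "w = qpow q (2 * \<nu>)"
  define Q where "Q = complex_of_real (q^2)"
  define E0 where "E0 = - (of_nat (Suc m) * (of_nat (Suc m) + \<nu>)) + of_nat (Suc s) * (3 * of_nat (Suc s) + \<nu> - 1)"
  define E1 where "E1 = - (of_nat m * (of_nat m + (\<nu> + 1))) + of_nat (Suc s) * (3 * of_nat (Suc s) + (\<nu> + 1) - 1)"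
  define E2 where "E2 = - (of_nat (m - 1) * (of_nat (m - 1) + (\<nu> + 1 + 1))) + of_nat s * (3 * of_nat s + (\<nu> + 1 + 1) - 1)"
  have ratio: "coef_ratio w Q (Suc m) (Suc s) = Q ^ Suc s * (1 - w) * coef_ratio (w * Q) Q m (Suc s) + coef_ratio (w * Q * Q) Q (m - 1) s"
    unfolding w_def Q_def
    by (rule coef_ratio_Suc[OF norm_of_real_square_less_1[OF assms(1,2)] qpow_double_mult_power_neq_1[OF assms(1) hyp] m])
  have a0: "coef_a q \<nu> (Suc m) (Suc s) = (-1) ^ Suc s * qpow q E0 * coef_ratio w Q (Suc m) (Suc s)"
    unfolding coef_a_eq_coef_ratio E0_def w_def Q_def ..
  have a1: "coef_a q (\<nu> + 1) m (Suc s) = (-1) ^ Suc s * qpow q E1 * coef_ratio (w * Q) Q m (Suc s)"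
    unfolding coef_a_eq_coef_ratio E1_def qpow_double_Suc[OF assms(1)] w_def Q_def ..
  have b: "coef_b q (\<nu> + 1) m s = - qpow q (2 * of_nat s - of_nat m - (\<nu> + 1)) * ((-1) ^ s * qpow q E2 * coef_ratio (w * Q * Q) Q (m - 1) s)"
    unfolding coef_b_def coef_a_eq_coef_ratio E2_def qpow_double_Suc[OF assms(1)] w_def Q_def ..
  have Q: "Q ^ Suc s = qpow q (of_nat (2 * Suc s))"
    unfolding Q_def qpow_of_nat[OF assms(1)] by (simp only: power_mult of_real_power)
  have e1: "qpow q E0 * qpow q (of_nat (2 * Suc s)) = qpow q (- of_nat (m - Suc s)) * qpow q E1 * qpow q (- (1 + \<nu>))"
    unfolding qpow_add[symmetric] by (rule arg_cong[where f = "qpow q"]) (simp add: E0_def E1_def m algebra_simps)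
  have e2: "qpow q E0 = qpow q (- of_nat (Suc m - 2 * Suc s)) * qpow q (2 * of_nat s - of_nat m - (\<nu> + 1)) * qpow q E2"
    unfolding qpow_add[symmetric] by (rule arg_cong[where f = "qpow q"]) (simp add: E0_def E2_def m algebra_simps)
  show ?thesis
    unfolding a0 a1 b ratio coef_a_1_0[OF assms(1,2)] w_def[symmetric] Q distrib_left
  proof (rule arg_cong2[where f = "(+)"])
    show "(-1) ^ Suc s * qpow q E0 * (qpow q (of_nat (2 * Suc s)) * (1 - w) * coef_ratio (w * Q) Q m (Suc s)) =
        qpow q (- of_nat (m - Suc s)) * ((-1) ^ Suc s * qpow q E1 * coef_ratio (w * Q) Q m (Suc s)) * (qpow q (- (1 + \<nu>)) * (1 - w))"
      using e1 by (simp add: mult_ac)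
    show "(-1) ^ Suc s * qpow q E0 * coef_ratio (w * Q * Q) Q (m - 1) s =
        qpow q (- of_nat (Suc m - 2 * Suc s)) * (- qpow q (2 * of_nat s - of_nat m - (\<nu> + 1)) * ((-1) ^ s * qpow q E2 * coef_ratio (w * Q * Q) Q (m - 1) s))"
      unfolding e2 by (simp add: mult_ac)
  qed
qed

lemma coef_a_Suc_middle:
  assumes "0 < q" "q < 1" and hyp: "\<forall>i::nat. qpow q (2 * \<nu> + 2 * of_nat i) \<noteq> 1"
    and m: "m = 2 * s + 1"
  shows "coef_a q \<nu> (Suc m) (Suc s) = coef_b q (\<nu> + 1) m s"
proof -
  define w where "w = qpow q (2 * \<nu>)"
  define Q where "Q = complex_of_real (q^2)"
  have Q: "norm Q < 1" unfolding Q_def by (rule norm_of_real_square_less_1[OF assms(1,2)])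
  have w: "w * Q ^ j \<noteq> 1" for j
    unfolding w_def Q_def by (rule qpow_double_mult_power_neq_1[OF assms(1) hyp])
  have idx: "Suc m = 2 * Suc s" "m - 1 = 2 * s" using m by simp_all
  have "coef_ratio w Q (Suc m) (Suc s) = 1"
    unfolding idx(1) by (rule coef_ratio_middle[OF Q w])
  moreover have "coef_ratio (w * Q * Q) Q (m - 1) s = 1"
    unfolding idx(2) by (rule coef_ratio_middle[OF Q]) (metis w mult.assoc power_add power_Suc power2_eq_square)
  moreover have "qpow q (- (of_nat (Suc m) * (of_nat (Suc m) + \<nu>)) + of_nat (Suc s) * (3 * of_nat (Suc s) + \<nu> - 1)) =
      qpow q (2 * of_nat s - of_nat m - (\<nu> + 1)) *
      qpow q (- (of_nat (m - 1) * (of_nat (m - 1) + (\<nu> + 1 + 1))) + of_nat s * (3 * of_nat s + (\<nu> + 1 + 1) - 1))"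
    unfolding qpow_add[symmetric] by (rule arg_cong[where f = "qpow q"]) (simp add: m algebra_simps)
  ultimately show ?thesis
    unfolding coef_b_def coef_a_eq_coef_ratio qpow_double_Suc[OF assms(1)] w_def[symmetric] Q_def[symmetric]
    by simp
qed

lemma coef_b_Suc:
  assumes "0 < q" "q < 1" and "2 * j \<le> m"
  shows "coef_b q \<nu> (Suc m) j = qpow q (- of_nat (m - 2 * j)) * coef_a q (\<nu> + 1) m j * coef_b q \<nu> 1 0"
proof -
  have "qpow q (2 * of_nat j - of_nat (Suc m) - \<nu>) = qpow q (- of_nat (m - 2 * j)) * qpow q (- 1 - \<nu>)"
    unfolding qpow_add[symmetric] by (rule arg_cong[where f = "qpow q"]) (simp add: assms(3) of_nat_diff)
  then show ?thesis unfolding coef_b_def[of q \<nu> "Suc m"] coef_b_1_0[OF assms(1)] by simp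
qed

lemma coef_a_Suc_cases:
  assumes "0 < q" "q < 1" and hyp: "\<forall>i::nat. qpow q (2 * \<nu> + 2 * of_nat i) \<noteq> 1"
    and "2 * i \<le> Suc m"
  shows "coef_a q \<nu> (Suc m) i =
           (if 2 * i \<le> m then qpow q (- of_nat (m - i)) * coef_a q (\<nu> + 1) m i * coef_a q \<nu> 1 0 else 0)
         + (if 1 \<le> i then qpow q (- of_nat (Suc m - 2 * i)) * coef_b q (\<nu> + 1) m (i - 1) else 0)"
proof (cases i)
  case 0
  from coef_a_Suc_0[OF assms(1,2), of \<nu> m] show ?thesis using 0 by simp
next
  case (Suc s)
  show ?thesis
  proof (cases "2 * i \<le> m")
    case True
    then obtain r where "m = 2 * Suc s + r" using Suc le_Suc_ex by blast
    from coef_a_Suc[OF assms(1,2) hyp this] show ?thesis using True Suc by simp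
  next
    case False
    then have "m = 2 * s + 1" using assms(4) Suc by simp
    from coef_a_Suc_middle[OF assms(1,2) hyp this] show ?thesis
      using False Suc \<open>m = 2 * s + 1\<close> qpow_0[OF assms(1)] by simp
  qed
qed

lemma coef_a_Suc_div_power:
  assumes "0 < q" "q < 1" and "\<forall>i::nat. qpow q (2 * \<nu> + 2 * of_nat i) \<noteq> 1"
    and "2 * i \<le> Suc m"
  shows "coef_a q \<nu> (Suc m) i / complex_of_real (x ^ (Suc m - 2 * i)) =
           (if 2 * i \<le> m then coef_a q (\<nu> + 1) m i / complex_of_real ((x * q) ^ (m - 2 * i)) *
                               (coef_a q \<nu> 1 0 / complex_of_real (x * q ^ i)) else 0)
         + (if 1 \<le> i then coef_b q (\<nu> + 1) m (i - 1) / complex_of_real ((x * q) ^ (m - 1 - 2 * (i - 1))) else 0)"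
proof -
  have first: "qpow q (- of_nat (m - i)) * c' * c'' / complex_of_real (x ^ (Suc m - 2 * i)) =
      c' / complex_of_real ((x * q) ^ (m - 2 * i)) * (c'' / complex_of_real (x * q ^ i))"
    if "2 * i \<le> m" for c' c''
  proof -
    have "qpow q (- of_nat (m - i)) = qpow q (- of_nat (m - 2 * i)) * qpow q (- of_nat i)"
      unfolding qpow_add[symmetric] by (rule arg_cong[where f = "qpow q"]) (use that in \<open>simp add: of_nat_diff\<close>)
    moreover have "x ^ (Suc m - 2 * i) = x ^ (m - 2 * i) * x"
      using that by (simp add: Suc_diff_le)
    ultimately show ?thesis
      unfolding divide_of_real_power_mult[OF assms(1)] qpow_minus_of_nat[OF assms(1)]
      by (simp add: divide_inverse mult_ac)
  qed
  have second: "qpow q (- of_nat (Suc m - 2 * i)) * c / complex_of_real (x ^ (Suc m - 2 * i)) =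
      c / complex_of_real ((x * q) ^ (m - 1 - 2 * (i - 1)))" if "1 \<le> i" for c
  proof -
    have "m - 1 - 2 * (i - 1) = Suc m - 2 * i" using that assms(4) by simp
    then show ?thesis unfolding divide_of_real_power_mult[OF assms(1)] by simp
  qed
  show ?thesis
    unfolding coef_a_Suc_cases[OF assms] add_divide_distrib
    by (cases "2 * i \<le> m"; cases "1 \<le> i") (simp_all only: if_P if_not_P if_False first second div_0 add_0 add_0_right)
qed

lemma coef_b_Suc_div_power:
  assumes "0 < q" "q < 1" and "2 * j \<le> m"
  shows "coef_b q \<nu> (Suc m) j / complex_of_real (x ^ (Suc m - 1 - 2 * j)) =
         coef_a q (\<nu> + 1) m j / complex_of_real ((x * q) ^ (m - 2 * j)) * coef_b q \<nu> 1 0"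
  unfolding coef_b_Suc[OF assms] divide_of_real_power_mult[OF assms(1)] by simp

section \<open>Iterating the contiguous relation\<close>

definition hahn_exton_expansion :: "real \<Rightarrow> complex \<Rightarrow> nat \<Rightarrow> real \<Rightarrow> complex" where
  "hahn_exton_expansion q \<nu> m x =
     (\<Sum>i\<in>{0..m div 2}. coef_a q \<nu> m i / complex_of_real (x ^ (m - 2 * i)) * hahn_exton q \<nu> (x * q ^ i))
   + (\<Sum>j<(m + 1) div 2. coef_b q \<nu> m j / complex_of_real (x ^ (m - 1 - 2 * j)) * hahn_exton q (\<nu> - 1) (x * q ^ j))"

lemma hahn_exton_expansion_0: "0 < q \<Longrightarrow> hahn_exton_expansion q \<nu> 0 x = hahn_exton q \<nu> x"
  unfolding hahn_exton_expansion_def coef_a_def by (simp add: qpoch_def qpow_0)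

lemma hahn_exton_expansion_Suc:
  assumes "0 < q" "q < 1" and "\<forall>i::nat. qpow q (2 * \<nu> + 2 * of_nat i) \<noteq> 1" and "0 < x"
  shows "hahn_exton_expansion q (\<nu> + 1) m (x * q) = hahn_exton_expansion q \<nu> (Suc m) x"
proof -
  define J0 where "J0 i = hahn_exton q \<nu> (x * q ^ i)" for i
  define J1 where "J1 i = hahn_exton q (\<nu> - 1) (x * q ^ i)" for i
  define A where "A i = coef_a q (\<nu> + 1) m i / complex_of_real ((x * q) ^ (m - 2 * i))" for i
  define B where "B j = coef_b q (\<nu> + 1) m j / complex_of_real ((x * q) ^ (m - 1 - 2 * j))" for j
  define a0 where "a0 i = coef_a q \<nu> 1 0 / complex_of_real (x * q ^ i)" for i
  have contiguous: "hahn_exton q (\<nu> + 1) (x * q * q ^ i) = a0 i * J0 i + coef_b q \<nu> 1 0 * J1 i" for i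
    using hahn_exton_contiguous[OF assms(1,2), of "x * q ^ i" \<nu>] assms(1,4)
    unfolding a0_def J0_def J1_def by (simp add: mult_ac)
  have "hahn_exton q (\<nu> + 1 - 1) (x * q * q ^ j) = J0 (Suc j)" for j
    unfolding J0_def by (simp add: mult_ac)
  then have "hahn_exton_expansion q (\<nu> + 1) m (x * q) =
      (\<Sum>i\<in>{0..m div 2}. A i * (a0 i * J0 i + coef_b q \<nu> 1 0 * J1 i)) + (\<Sum>j<Suc m div 2. B j * J0 (Suc j))"
    unfolding hahn_exton_expansion_def contiguous A_def B_def by simp
  also have "\<dots> = ((\<Sum>i\<in>{0..m div 2}. A i * a0 i * J0 i) + (\<Sum>j<Suc m div 2. B j * J0 (Suc j)))
                 + (\<Sum>i\<in>{0..m div 2}. A i * coef_b q \<nu> 1 0 * J1 i)"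
    by (simp add: distrib_left sum.distrib mult.assoc)
  also have "(\<Sum>i\<in>{0..m div 2}. A i * a0 i * J0 i) + (\<Sum>j<Suc m div 2. B j * J0 (Suc j)) =
      (\<Sum>i\<in>{0..Suc m div 2}. (if 2 * i \<le> m then A i * a0 i * J0 i else 0) + (if 1 \<le> i then B (i - 1) * J0 i else 0))"
    using sum_half_shift[of "\<lambda>i. A i * a0 i * J0 i" m "\<lambda>i. B (i - 1) * J0 i"] by simp
  also have "\<dots> = (\<Sum>i\<in>{0..Suc m div 2}. coef_a q \<nu> (Suc m) i / complex_of_real (x ^ (Suc m - 2 * i)) * J0 i)"
  proof (rule sum.cong[OF refl])
    fix i assume "i \<in> {0..Suc m div 2}"
    then have "2 * i \<le> Suc m" by auto
    show "(if 2 * i \<le> m then A i * a0 i * J0 i else 0) + (if 1 \<le> i then B (i - 1) * J0 i else 0) =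
        coef_a q \<nu> (Suc m) i / complex_of_real (x ^ (Suc m - 2 * i)) * J0 i"
      unfolding coef_a_Suc_div_power[OF assms(1-3) \<open>2 * i \<le> Suc m\<close>] A_def B_def a0_def
      by (simp add: distrib_right)
  qed
  also have "(\<Sum>i\<in>{0..m div 2}. A i * coef_b q \<nu> 1 0 * J1 i) =
      (\<Sum>j<(Suc m + 1) div 2. coef_b q \<nu> (Suc m) j / complex_of_real (x ^ (Suc m - 1 - 2 * j)) * J1 j)"
  proof -
    have "{..<(Suc m + 1) div 2} = {0..m div 2}" by auto
    moreover have "coef_b q \<nu> (Suc m) j / complex_of_real (x ^ (Suc m - 1 - 2 * j)) = A j * coef_b q \<nu> 1 0"
      if "j \<in> {0..m div 2}" for j
      unfolding A_def using coef_b_Suc_div_power[OF assms(1,2)] that by auto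
    ultimately show ?thesis by (intro sum.cong) auto
  qed
  finally show ?thesis unfolding hahn_exton_expansion_def J0_def J1_def by simp
qed

lemma hahn_exton_eq_expansion:
  assumes "0 < q" "q < 1" and "\<forall>i::nat. qpow q (2 * \<nu> + 2 * of_nat i) \<noteq> 1" and "0 < x"
  shows "hahn_exton q (\<nu> + of_nat m) (x * q ^ m) = hahn_exton_expansion q \<nu> m x"
  using assms(3,4)
proof (induction m arbitrary: \<nu> x)
  case 0
  then show ?case using hahn_exton_expansion_0[OF assms(1)] by simp
next
  case (Suc m)
  have "\<forall>i::nat. qpow q (2 * (\<nu> + 1) + 2 * of_nat i) \<noteq> 1"
  proof
    fix i :: nat
    have "2 * (\<nu> + 1) + 2 * of_nat i = 2 * \<nu> + 2 * of_nat (Suc i)" by (simp add: algebra_simps)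
    then show "qpow q (2 * (\<nu> + 1) + 2 * of_nat i) \<noteq> 1" using Suc.prems(1) by metis
  qed
  moreover have "0 < x * q" using Suc.prems(2) assms(1) by simp
  ultimately have "hahn_exton q (\<nu> + 1 + of_nat m) (x * q * q ^ m) = hahn_exton_expansion q (\<nu> + 1) m (x * q)"
    by (rule Suc.IH)
  also have "\<dots> = hahn_exton_expansion q \<nu> (Suc m) x"
    by (rule hahn_exton_expansion_Suc[OF assms(1,2) Suc.prems])
  finally show ?case by (simp add: algebra_simps)
qed

theorem lemma4p4:
  fixes q :: real and \<nu> :: complex and m :: nat and x :: real
  assumes "0 < q" and "q < 1"
    and "\<forall>i::nat. qpow q (2 * \<nu> + 2 * of_nat i) \<noteq> 1"
    and "0 < x"
  shows "hahn_exton q (\<nu> + of_nat m) (x * q ^ m) =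
           (\<Sum>i\<in>{0..m div 2}. coef_a q \<nu> m i / complex_of_real (x ^ (m - 2 * i)) *
                                hahn_exton q \<nu> (x * q ^ i))
         + (\<Sum>j<(m + 1) div 2. coef_b q \<nu> m j / complex_of_real (x ^ (m - 1 - 2 * j)) *
                                hahn_exton q (\<nu> - 1) (x * q ^ j))"
  using hahn_exton_eq_expansion[OF assms] unfolding hahn_exton_expansion_def .

end
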